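(* Let $K,s\ge1$ and let $f:\{0,1\}^s\to\mathbb Z_K$ be defined by $f(a_1,\ldots,a_s)=(\sum_{i=1}^s a_i)\bmod K$. If $s\ge K^2$, then $|f^{-1}(x)|\le\big(1+4\frac{K}{\sqrt s}\big)|f^{-1}(y)|$ for all $x,y\in\mathbb Z_K$. *)

theory Defs
  imports "HOL-Analysis.Analysis"
begin

definition cube :: "nat \<Rightarrow> (nat \<Rightarrow> nat) set" where
  "cube s = PiE {0..<s} (\<lambda>_. {0, 1})"

text \<open>f(a) = (sum of a_i) mod K, with Z_K identified with {0..<K}.\<close>
definition sum_mod :: "nat \<Rightarrow> nat \<Rightarrow> (nat \<Rightarrow> nat) \<Rightarrow> nat" where
  "sum_mod K s a = (\<Sum>i<s. a i) mod K"

definition fiber :: "nat \<Rightarrow> nat \<Rightarrow> nat \<Rightarrow> (nat \<Rightarrow> nat) set" where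
  "fiber K s x = {a \<in> cube s. sum_mod K s a = x}"

end

theory Submission
  imports Defs
begin

text \<open>
  Let \<open>N z\<close> be the size of the fibre over \<open>z\<close> and \<open>M = s choose (s div 2)\<close>.
  Since \<open>N z\<close> is the sum of the binomial coefficients \<open>s choose i\<close> with \<open>i mod K = z\<close>,
  slicing the binomial row horizontally writes \<open>N z\<close> as a sum over the \<open>M\<close> levels \<open>t\<close> of the
  number of \<open>i\<close> in the residue class of \<open>z\<close> with \<open>s choose i \<ge> t\<close>. By unimodality each such
  superlevel set is an interval, and in an interval two residue classes differ in size by
  at most one; hence \<open>N x \<le> N y + M\<close>. Summing over all \<open>K\<close> classes gives
  \<open>2^s \<le> K N y + (K - 1) M\<close>. Finally the central binomial estimate
  \<open>5 \<surd>s M \<le> 4 (2^s + M)\<close>, a sharp form of \<open>M \<approx> 2^s \<surd>(2/(\<pi> s))\<close>, together with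
  \<open>K \<le> \<surd>s\<close> turns this into \<open>\<surd>s M \<le> 4 K N y\<close>.
\<close>

lemma central_binomial_Suc:
  "Suc n * (2 * Suc n choose Suc n) = 2 * (2 * n + 1) * (2 * n choose n)"
proof -
  have "Suc n * (2 * Suc n choose Suc n) = 2 * (Suc n * (Suc (2 * n) choose n))"
    using Suc_times_binomial[of n "Suc (2 * n)"] by (simp del: binomial_Suc_Suc)
  also have "Suc (2 * n) choose n = Suc (2 * n) choose Suc n"
    using binomial_symmetric[of n "Suc (2 * n)"] by simp
  also have "Suc n * (Suc (2 * n) choose Suc n) = (2 * n + 1) * (2 * n choose n)"
    using Suc_times_binomial[of n "2 * n"] by (simp del: binomial_Suc_Suc)
  finally show ?thesis by simp
qed

lemma central_binomial_sq_step:
  fixes c d :: nat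
  assumes "c \<le> 3 * d"
  shows "(c * Suc n + d) * (2 * Suc n choose Suc n)^2 \<le> 16 * ((c * n + d) * (2 * n choose n)^2)"
proof -
  have "(c * Suc n + d) * (2 * n + 1)^2 + 4 * d * n + 3 * d = 4 * (c * n + d) * (Suc n)^2 + c * n + c"
    by (simp add: power2_eq_square algebra_simps)
  moreover have "c * n + c \<le> 4 * d * n + 3 * d"
    using assms mult_le_mono1[OF assms, of n] by linarith
  ultimately have poly: "(c * Suc n + d) * (2 * n + 1)^2 \<le> 4 * (c * n + d) * (Suc n)^2"
    by linarith
  have "(Suc n)^2 * ((c * Suc n + d) * (2 * Suc n choose Suc n)^2)
      = (c * Suc n + d) * (Suc n * (2 * Suc n choose Suc n))^2"
    by (simp only: power_mult_distrib ac_simps)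
  also have "\<dots> = 4 * ((c * Suc n + d) * (2 * n + 1)^2) * (2 * n choose n)^2"
    by (simp only: central_binomial_Suc power_mult_distrib) (simp add: ac_simps)
  also have "\<dots> \<le> 4 * (4 * (c * n + d) * (Suc n)^2) * (2 * n choose n)^2"
    using poly by simp
  also have "\<dots> = (Suc n)^2 * (16 * ((c * n + d) * (2 * n choose n)^2))"
    by (simp add: algebra_simps)
  finally show ?thesis by simp
qed

lemma central_binomial_sq_antimono:
  fixes c d :: nat
  assumes "c \<le> 3 * d" and "m \<le> n"
  shows "(c * n + d) * (2 * n choose n)^2 * 16^m \<le> (c * m + d) * (2 * m choose m)^2 * 16^n"
  using assms(2)
proof (induction n rule: dec_induct)
  case (step n)
  have "(c * Suc n + d) * (2 * Suc n choose Suc n)^2 * 16^m \<le> 16 * ((c * n + d) * (2 * n choose n)^2 * 16^m)"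
    using central_binomial_sq_step[OF assms(1), of n] by (simp add: mult_right_mono)
  also have "\<dots> \<le> (c * m + d) * (2 * m choose m)^2 * 16^Suc n"
    using step.IH by simp
  finally show ?case .
qed simp

text \<open>
  The rate \<open>75/24\<close> lies just below \<open>\<pi>\<close>, the growth rate of \<open>16^n / (2n choose n)^2\<close>,
  so the monotone bound takes over only from \<open>n = 16\<close>; smaller \<open>n\<close> are evaluated.
\<close>
lemma central_binomial_sq_le:
  "50 * n * (2 * n choose n)^2 \<le> 16 * (4^n + (2 * n choose n))^2"
proof (cases "n < 16")
  case True
  then have "n \<in> {..<16}"
    by simp
  then show ?thesis
    by (auto simp: lessThan_nat_numeral binomial_fact' fact_numeral)
next
  case False
  have "(75 * n + 25) * (2 * n choose n)^2 * 16^16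
      \<le> (75 * 16 + 25) * (2 * 16 choose 16)^2 * 16^n"
    using central_binomial_sq_antimono[of 75 25 16 n] False by simp
  also have "\<dots> \<le> 24 * 16^n * 16^16"
    by (simp add: binomial_fact' fact_numeral)
  finally have bound: "(75 * n + 25) * (2 * n choose n)^2 \<le> 24 * 16^n"
    by (simp only: mult_le_cancel2) simp
  have "3 * (50 * n * (2 * n choose n)^2) \<le> 2 * ((75 * n + 25) * (2 * n choose n)^2)"
    by (simp add: algebra_simps)
  also have "\<dots> \<le> 3 * (16 * (4^n)^2)"
    using bound by (simp add: power2_eq_square ac_simps flip: power_mult_distrib)
  finally have "50 * n * (2 * n choose n)^2 \<le> 16 * (4^n)^2"
    by simp
  also have "\<dots> \<le> 16 * (4^n + (2 * n choose n))^2"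
    by (simp add: power_mono)
  finally show ?thesis .
qed

lemma binomial_middle_sq_le:
  "25 * s * (s choose (s div 2))^2 \<le> 16 * (2^s + (s choose (s div 2)))^2"
proof (cases "even s")
  case True
  then obtain n where s: "s = 2 * n"
    by (rule evenE)
  have "(2::nat)^s = 4^n"
    unfolding s power_mult by simp
  moreover have "s div 2 = n"
    by (simp add: s)
  moreover have "25 * s = 50 * n"
    by (simp add: s)
  ultimately show ?thesis
    using central_binomial_sq_le[of n] by (simp only: s)
next
  case False
  then obtain n where s: "s = 2 * n + 1"
    by (rule oddE)
  define M where "M = s choose n"
  have middle: "s div 2 = n"
    by (simp add: s)
  have "s choose Suc n = M"
    using binomial_symmetric[of "Suc n" s] by (simp add: M_def s)
  moreover have "2 * Suc n = Suc s"
    by (simp add: s)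
  ultimately have "2 * Suc n choose Suc n = 2 * M"
    by (simp only: binomial_Suc_Suc M_def mult_2)
  moreover have "(4::nat)^Suc n = 2 * 2^s"
    by (simp add: s power_mult)
  ultimately have "50 * Suc n * (2 * M)^2 \<le> 16 * (2 * 2^s + 2 * M)^2"
    using central_binomial_sq_le[of "Suc n"] by (simp only:)
  moreover have "4 * (25 * s * M^2) \<le> 50 * Suc n * (2 * M)^2"
    by (simp add: s power_mult_distrib)
  moreover have "16 * (2 * 2^s + 2 * M)^2 = 4 * (16 * (2^s + M)^2)"
    unfolding distrib_left[symmetric] power_mult_distrib by simp
  ultimately have "25 * s * M^2 \<le> 16 * (2^s + M)^2"
    by linarith
  then show ?thesis
    by (simp only: middle M_def)
qed

lemma min_binomial_le_binomial:
  assumes "i \<le> k" and "k \<le> j" and "j \<le> s"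
  shows "min (s choose i) (s choose j) \<le> s choose k"
proof (cases "2 * k \<le> s")
  case True
  then have "s choose i \<le> s choose k"
    using assms by (intro binomial_mono) auto
  then show ?thesis
    by simp
next
  case False
  then have "s choose j \<le> s choose k"
    using assms by (intro binomial_antimono) auto
  then show ?thesis
    by simp
qed

lemma sum_eq_sum_card_superlevel:
  fixes f :: "'a \<Rightarrow> nat"
  assumes "finite A" and "\<And>i. i \<in> A \<Longrightarrow> f i \<le> M"
  shows "(\<Sum>i\<in>A. f i) = (\<Sum>t\<in>{1..M}. card {i \<in> A. t \<le> f i})"
proof -
  have "f i = (\<Sum>t\<in>{1..M}. of_bool (t \<le> f i))" if "i \<in> A" for i
  proof -
    have "{1..M} \<inter> {t. t \<le> f i} = {1..f i}"
      using assms(2)[OF that] by auto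
    then show ?thesis
      by simp
  qed
  then have "(\<Sum>i\<in>A. f i) = (\<Sum>i\<in>A. \<Sum>t\<in>{1..M}. of_bool (t \<le> f i))"
    by (rule sum.cong[OF refl])
  also have "\<dots> = (\<Sum>t\<in>{1..M}. \<Sum>i\<in>A. of_bool (t \<le> f i))"
    by (rule sum.swap)
  also have "\<dots> = (\<Sum>t\<in>{1..M}. card {i \<in> A. t \<le> f i})"
    using assms(1) by (simp only: sum_of_bool_eq Collect_conj_eq Collect_mem_eq of_nat_id)
  finally show ?thesis .
qed

lemma add_le_of_mod_eq:
  fixes i m K :: nat
  assumes "i < m" and "i mod K = m mod K"
  shows "i + K \<le> m"
proof -
  have "K dvd m - i"
    using assms mod_eq_dvd_iff_nat[of i m K] by simp
  then have "K \<le> m - i"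
    using assms(1) by (simp add: dvd_imp_le)
  then show ?thesis
    using assms(1) by linarith
qed

lemma mod_add_shift_eq:
  fixes i y K :: nat
  assumes "y < K"
  shows "(i + (y + K - i mod K) mod K) mod K = y"
proof -
  have "i mod K < K"
    using assms by simp
  have "(i + (y + K - i mod K) mod K) mod K = (i mod K + (y + K - i mod K)) mod K"
    by (metis mod_add_left_eq mod_add_right_eq)
  also have "\<dots> = (y + K) mod K"
    using \<open>i mod K < K\<close> by simp
  also have "\<dots> = y"
    using assms by simp
  finally show ?thesis .
qed

text \<open>
  Shifting by \<open>(y - x) mod K\<close> maps the class of \<open>x\<close> without its maximum into the class
  of \<open>y\<close>; the shift is less than \<open>K\<close>, so convexity keeps the image inside \<open>S\<close>.
\<close>
lemma card_residue_class_le_Suc: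
  fixes S :: "nat set"
  assumes "finite S" and convex: "\<And>i j. i \<in> S \<Longrightarrow> j \<in> S \<Longrightarrow> {i..j} \<subseteq> S" and "y < K"
  shows "card {i \<in> S. i mod K = x} \<le> Suc (card {i \<in> S. i mod K = y})"
proof (cases "{i \<in> S. i mod K = x} = {}")
  case True
  then show ?thesis
    by (simp only: card.empty zero_le)
next
  case False
  define A where "A = {i \<in> S. i mod K = x}"
  define B where "B = {i \<in> S. i mod K = y}"
  define m where "m = Max A"
  define d where "d = (y + K - x) mod K"
  have "finite A"
    using assms(1) by (simp add: A_def)
  moreover have "A \<noteq> {}"
    using False by (simp add: A_def)
  ultimately have "m \<in> A"
    unfolding m_def by (rule Max_in)
  have "i + d \<in> B" if "i \<in> A" and "i \<noteq> m" for i
  proof -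
    have "i < m"
      using that \<open>finite A\<close> by (simp add: m_def order.not_eq_order_implies_strict)
    moreover have "i mod K = m mod K"
      using \<open>i \<in> A\<close> \<open>m \<in> A\<close> by (simp add: A_def)
    ultimately have "i + K \<le> m"
      by (rule add_le_of_mod_eq)
    moreover have "d < K"
      using \<open>y < K\<close> by (simp add: d_def)
    ultimately have "i + d \<in> S"
      using convex[of i m] \<open>i \<in> A\<close> \<open>m \<in> A\<close> by (auto simp: A_def)
    moreover have "(i + d) mod K = y"
      using mod_add_shift_eq[OF \<open>y < K\<close>, of i] \<open>i \<in> A\<close> by (simp add: A_def d_def)
    ultimately show ?thesis
      by (simp add: B_def)
  qed
  then have "card (A - {m}) \<le> card B"
    using assms(1) by (intro card_inj_on_le[of "\<lambda>i. i + d"]) (auto simp: B_def inj_on_def)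
  then show ?thesis
    using \<open>finite A\<close> \<open>m \<in> A\<close> by (simp add: A_def B_def card_Diff_singleton)
qed

lemma cube_values:
  assumes "a \<in> cube s" and "i < s"
  shows "a i = 0 \<or> a i = 1"
  using assms unfolding cube_def by (auto simp: PiE_iff)

lemma sum_cube_eq_card:
  assumes "a \<in> cube s"
  shows "(\<Sum>i<s. a i) = card {i \<in> {..<s}. a i = 1}"
proof -
  have "(\<Sum>i<s. a i) = (\<Sum>i<s. of_bool (a i = 1))"
    using cube_values[OF assms] by (intro sum.cong) auto
  also have "\<dots> = card ({..<s} \<inter> {i. a i = 1})"
    by simp
  finally show ?thesis
    by (simp only: Collect_conj_eq Collect_mem_eq)
qed

lemma bij_betw_cube_Pow:
  "bij_betw (\<lambda>a. {i \<in> {..<s}. a i = 1}) (cube s) (Pow {..<s})"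
proof (rule bij_betwI')
  fix a b
  assume a: "a \<in> cube s" and b: "b \<in> cube s"
  show "({i \<in> {..<s}. a i = 1} = {i \<in> {..<s}. b i = 1}) = (a = b)"
  proof
    assume same: "{i \<in> {..<s}. a i = 1} = {i \<in> {..<s}. b i = 1}"
    have "a i = b i" if "i \<in> {0..<s}" for i
    proof -
      have "a i = 1 \<longleftrightarrow> b i = 1"
        using same that by (auto simp: set_eq_iff)
      then show ?thesis
        using that cube_values[OF a, of i] cube_values[OF b, of i] by auto
    qed
    then show "a = b"
      using PiE_ext[of a "{0..<s}" "\<lambda>_. {0, 1}" b] a b unfolding cube_def by blast
  qed simp
next
  fix B
  assume "B \<in> Pow {..<s}"
  define a :: "nat \<Rightarrow> nat" where "a = restrict (\<lambda>i. of_bool (i \<in> B)) {0..<s}"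
  have "a \<in> cube s"
    unfolding a_def cube_def by (simp add: Pi_iff)
  moreover have "B = {i \<in> {..<s}. a i = 1}"
    using \<open>B \<in> Pow {..<s}\<close> unfolding a_def by auto
  ultimately show "\<exists>a\<in>cube s. B = {i \<in> {..<s}. a i = 1}"
    by blast
qed auto

lemma card_cube: "card (cube s) = 2^s"
  using bij_betw_same_card[OF bij_betw_cube_Pow] by (simp add: card_Pow)

lemma finite_cube: "finite (cube s)"
  unfolding cube_def by (simp add: finite_PiE)

lemma card_cube_weight: "card {a \<in> cube s. (\<Sum>i<s. a i) = k} = s choose k"
proof -
  let ?ones = "\<lambda>a :: nat \<Rightarrow> nat. {i \<in> {..<s}. a i = 1}"
  have "?ones ` {a \<in> cube s. (\<Sum>i<s. a i) = k} = {B. B \<subseteq> {..<s} \<and> card B = k}"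
  proof
    show "?ones ` {a \<in> cube s. (\<Sum>i<s. a i) = k} \<subseteq> {B. B \<subseteq> {..<s} \<and> card B = k}"
      by (auto simp: sum_cube_eq_card)
  next
    show "{B. B \<subseteq> {..<s} \<and> card B = k} \<subseteq> ?ones ` {a \<in> cube s. (\<Sum>i<s. a i) = k}"
    proof
      fix B
      assume B: "B \<in> {B. B \<subseteq> {..<s} \<and> card B = k}"
      then obtain a where "a \<in> cube s" and "B = ?ones a"
        using bij_betw_imp_surj_on[OF bij_betw_cube_Pow, of s] by blast
      with B show "B \<in> ?ones ` {a \<in> cube s. (\<Sum>i<s. a i) = k}"
        by (auto simp: sum_cube_eq_card)
    qed
  qed
  then have "bij_betw ?ones {a \<in> cube s. (\<Sum>i<s. a i) = k} {B. B \<subseteq> {..<s} \<and> card B = k}"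
    by (intro bij_betw_subset[OF bij_betw_cube_Pow]) auto
  then show ?thesis
    by (simp add: bij_betw_same_card n_subsets)
qed

lemma sum_cube_le:
  assumes "a \<in> cube s"
  shows "(\<Sum>i<s. a i) \<le> s"
proof -
  have "card {i \<in> {..<s}. a i = 1} \<le> card {..<s}"
    by (intro card_mono) auto
  then show ?thesis
    by (simp add: sum_cube_eq_card[OF assms])
qed

lemma card_fiber_eq_sum_binomial:
  "card (fiber K s x) = (\<Sum>i | i \<le> s \<and> i mod K = x. s choose i)"
proof -
  have "fiber K s x = (\<Union>i \<in> {i. i \<le> s \<and> i mod K = x}. {a \<in> cube s. (\<Sum>j<s. a j) = i})"
    using sum_cube_le by (auto simp: fiber_def sum_mod_def)
  moreover have "card (\<Union>i \<in> {i. i \<le> s \<and> i mod K = x}. {a \<in> cube s. (\<Sum>j<s. a j) = i})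
      = (\<Sum>i | i \<le> s \<and> i mod K = x. card {a \<in> cube s. (\<Sum>j<s. a j) = i})"
    by (rule card_UN_disjoint) (auto simp: finite_cube)
  ultimately show ?thesis
    by (simp add: card_cube_weight)
qed

lemma sum_card_fiber:
  assumes "0 < K"
  shows "(\<Sum>z<K. card (fiber K s z)) = 2^s"
proof -
  have "cube s = (\<Union>z<K. fiber K s z)"
    using assms by (auto simp: fiber_def sum_mod_def)
  moreover have "card (\<Union>z<K. fiber K s z) = (\<Sum>z<K. card (fiber K s z))"
    by (rule card_UN_disjoint) (auto simp: fiber_def finite_cube)
  ultimately show ?thesis
    using card_cube by metis
qed

lemma card_fiber_le_add_binomial_middle:
  assumes "y < K"
  shows "card (fiber K s x) \<le> card (fiber K s y) + (s choose (s div 2))"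
proof -
  define M where "M = s choose (s div 2)"
  define S where "S t = {i \<in> {..s}. t \<le> s choose i}" for t
  have fiber_layers: "card (fiber K s z) = (\<Sum>t\<in>{1..M}. card {i \<in> S t. i mod K = z})" for z
  proof -
    have "card (fiber K s z) = (\<Sum>t\<in>{1..M}. card {i \<in> {i. i \<le> s \<and> i mod K = z}. t \<le> s choose i})"
      unfolding card_fiber_eq_sum_binomial M_def
      by (rule sum_eq_sum_card_superlevel) (auto simp: binomial_maximum)
    also have "\<dots> = (\<Sum>t\<in>{1..M}. card {i \<in> S t. i mod K = z})"
      unfolding S_def by (intro sum.cong refl arg_cong[where f = card]) auto
    finally show ?thesis .
  qed
  have "(\<Sum>t\<in>{1..M}. card {i \<in> S t. i mod K = x}) \<le> (\<Sum>t\<in>{1..M}. Suc (card {i \<in> S t. i mod K = y}))"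
  proof (rule sum_mono)
    fix t
    have "{i..j} \<subseteq> S t" if "i \<in> S t" and "j \<in> S t" for i j
      using that min_binomial_le_binomial[of i _ j s] by (fastforce simp: S_def)
    then show "card {i \<in> S t. i mod K = x} \<le> Suc (card {i \<in> S t. i mod K = y})"
      using assms by (intro card_residue_class_le_Suc) (auto simp: S_def)
  qed
  also have "\<dots> = (\<Sum>t\<in>{1..M}. card {i \<in> S t. i mod K = y}) + M"
    by (simp add: sum_Suc)
  finally show ?thesis
    by (simp only: fiber_layers M_def)
qed

lemma two_pow_le_card_fiber:
  assumes "y < K"
  shows "2^s \<le> K * card (fiber K s y) + (K - 1) * (s choose (s div 2))"
proof -
  have "2^s = card (fiber K s y) + (\<Sum>z\<in>{..<K} - {y}. card (fiber K s z))"
    using assms sum_card_fiber[of K s] by (simp add: sum.remove)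
  also have "\<dots> \<le> card (fiber K s y) + (\<Sum>z\<in>{..<K} - {y}. card (fiber K s y) + (s choose (s div 2)))"
    using assms by (intro add_left_mono sum_mono card_fiber_le_add_binomial_middle)
  also have "\<dots> = K * card (fiber K s y) + (K - 1) * (s choose (s div 2))"
    using assms by (cases K) (auto simp: algebra_simps)
  finally show ?thesis .
qed

lemma sqrt_mult_binomial_middle_le:
  "5 * sqrt (real s) * real (s choose (s div 2)) \<le> 4 * (2^s + real (s choose (s div 2)))"
proof (rule power2_le_imp_le)
  define M where "M = real (s choose (s div 2))"
  have "real (25 * s * (s choose (s div 2))^2) \<le> real (16 * (2^s + (s choose (s div 2)))^2)"
    using binomial_middle_sq_le[of s] by (simp only: of_nat_le_iff)
  then have "(5 * sqrt s * M)^2 \<le> 16 * (2^s + M)^2"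
    by (simp add: M_def power_mult_distrib)
  also have "\<dots> = (4 * (2^s + M))^2"
    by (simp only: power_mult_distrib) simp
  finally show "(5 * sqrt s * M)^2 \<le> (4 * (2^s + M))^2" .
qed simp

lemma sqrt_mult_binomial_middle_le_card_fiber:
  assumes "y < K" and "K^2 \<le> s"
  shows "sqrt (real s) * real (s choose (s div 2)) \<le> 4 * real K * real (card (fiber K s y))"
proof -
  define M where "M = real (s choose (s div 2))"
  define N where "N = real (card (fiber K s y))"
  have "real K \<le> sqrt s"
    using assms(2) by (intro real_le_rsqrt) (simp flip: of_nat_power)
  then have "K * M \<le> sqrt s * M"
    by (simp add: M_def mult_right_mono)
  moreover have "2^s \<le> K * N + K * M - M"
  proof -
    have "real (2^s) \<le> real (K * card (fiber K s y) + (K - 1) * (s choose (s div 2)))"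
      using two_pow_le_card_fiber[OF assms(1), of s] by (simp only: of_nat_le_iff)
    then show ?thesis
      using assms(1) by (simp add: N_def M_def of_nat_diff left_diff_distrib)
  qed
  moreover have "5 * sqrt s * M \<le> 4 * (2^s + M)"
    unfolding M_def by (rule sqrt_mult_binomial_middle_le)
  ultimately have "sqrt s * M \<le> 4 * real K * N"
    by (simp add: algebra_simps)
  then show ?thesis
    by (simp add: M_def N_def)
qed

theorem lemma5:
  fixes K s x y :: nat
  assumes "K \<ge> 1" and "s \<ge> 1" and "s \<ge> K^2"
    and "x < K" and "y < K"
  shows "real (card (fiber K s x)) \<le> (1 + 4 * real K / sqrt (real s)) * real (card (fiber K s y))"
proof -
  define N where "N z = real (card (fiber K s z))" for z
  define M where "M = real (s choose (s div 2))"
  have "sqrt s > 0"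
    using assms(2) by simp
  have "M \<le> 4 * real K * N y / sqrt s"
    using sqrt_mult_binomial_middle_le_card_fiber[OF assms(5,3)] \<open>sqrt s > 0\<close>
    by (simp add: M_def N_def pos_le_divide_eq mult.commute)
  have "N x \<le> N y + M"
    using card_fiber_le_add_binomial_middle[OF assms(5), of s x] by (simp add: N_def M_def)
  also have "\<dots> \<le> N y + 4 * real K * N y / sqrt s"
    using \<open>M \<le> 4 * real K * N y / sqrt s\<close> by simp
  also have "\<dots> = (1 + 4 * real K / sqrt s) * N y"
    by (simp add: field_simps)
  finally show ?thesis
    by (simp add: N_def)
qed

end
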